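(* In the algebra $\mathcal A_N$ the following identities hold for all $i,j,l,m\in I_N$. <ol> <li>$[s_{ij},\gamma_{lm}]=\delta_{jl}\gamma_{im}-\delta_{im}\gamma_{lj}$.</li> <li>$[s_{ij},s_{lm}]=\delta_{jl}s_{im}-\delta_{im}s_{lj}+\delta_{jl}\delta_{im}(l-i)$.</li> <li>$[t_{ij},t_{lm}]=\delta_{jl}t_{im}-\delta_{im}t_{lj}+(k+1)\delta_{jl}\delta_{im}(l-i)$.</li> <li>$\mathbb D\gamma_{ij}+\gamma_{ij}\mathbb D=2t_{ij}$.</li> <li>$[\mathbb D,t_{ij}]=(k+1)(i-j)\gamma_{ij}$.</li> <li>$[\mathbb D^2,\gamma_{ij}]=2(k+1)(i-j)\gamma_{ij}$ and $[\mathbb D^2,t_{ij}]=2(k+1)(i-j)t_{ij}$.</li> </ol> In particular, none of these relations depends on the cutoff $N$.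
   Context: Fix an integer $N\ge1$ and a number $k\in\mathbb C$ (the level), and let $I_N=\{-N,\dots,N\}$. Let $\mathcal U_k$ be the complex unital associative algebra generated by elements $e_{ij}$, $i,j\in I_N$, subject to $$e_{ij}e_{lm}-e_{lm}e_{ij}=\delta_{jl}e_{im}-\delta_{im}e_{lj}+k\,\delta_{jl}\delta_{im}(l-i).$$ Let $Cl_N$ be the complex Clifford algebra generated by $\gamma_{ij}$, $i,j\in I_N$, subject to $\gamma_{ij}\gamma_{lm}+\gamma_{lm}\gamma_{ij}=2\delta_{im}\delta_{jl}$. Let $\mathcal A_N=\mathcal U_k\otimes Cl_N$, in which the $e_{ij}$ commute with the $\gamma_{lm}$. Brackets denote commutators. Define the normal-ordered spin operators $$s_{ij}=\tfrac12\sum_{l\in I_N}\gamma_{il}\gamma_{lj}-\big(N-i+\tfrac12\big)\delta_{ij},$$ set $t_{ij}=e_{ij}+s_{ij}$, and define $$\mathbb D=\sum_{i,j\in I_N}e_{ij}\gamma_{ji}+\tfrac13\Big(\sum_{i>j}s_{ij}\gamma_{ji}+\sum_{i\le j}\gamma_{ji}s_{ij}\Big).$$ *)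

theory Defs
  imports Complex_Main
begin

text \<open>A unital ring 'a together with a central unital ring homomorphism
  emb from the complex numbers, i.e. 'a is a unital complex algebra.\<close>
definition complex_alg_emb :: "(complex \<Rightarrow> 'a::ring_1) \<Rightarrow> bool" where
  "complex_alg_emb emb \<longleftrightarrow>
     (\<forall>x y. emb (x + y) = emb x + emb y) \<and>
     (\<forall>x y. emb (x * y) = emb x * emb y) \<and>
     emb 1 = 1 \<and>
     (\<forall>x a. emb x * a = a * emb x)"

definition commut :: "'a::ring \<Rightarrow> 'a \<Rightarrow> 'a" where
  "commut a b = a * b - b * a"

definition IN :: "int \<Rightarrow> int set" where
  "IN N = {-N..N}"

definition spin :: "(complex \<Rightarrow> 'a::ring_1) \<Rightarrow> int \<Rightarrow> (int \<Rightarrow> int \<Rightarrow> 'a) \<Rightarrow> int \<Rightarrow> int \<Rightarrow> 'a" where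
  "spin emb N \<gamma> i j =
     emb (1/2) * (\<Sum>l\<in>IN N. \<gamma> i l * \<gamma> l j)
     - (if i = j then emb (of_int N - of_int i + 1/2) else 0)"

definition tee :: "(complex \<Rightarrow> 'a::ring_1) \<Rightarrow> int \<Rightarrow> (int \<Rightarrow> int \<Rightarrow> 'a) \<Rightarrow> (int \<Rightarrow> int \<Rightarrow> 'a) \<Rightarrow> int \<Rightarrow> int \<Rightarrow> 'a" where
  "tee emb N \<gamma> e i j = e i j + spin emb N \<gamma> i j"

definition Dirac :: "(complex \<Rightarrow> 'a::ring_1) \<Rightarrow> int \<Rightarrow> (int \<Rightarrow> int \<Rightarrow> 'a) \<Rightarrow> (int \<Rightarrow> int \<Rightarrow> 'a) \<Rightarrow> 'a" where
  "Dirac emb N \<gamma> e =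
     (\<Sum>(i,j)\<in>IN N \<times> IN N. e i j * \<gamma> j i)
     + emb (1/3) * ((\<Sum>(i,j)\<in>{(i,j)\<in>IN N \<times> IN N. i > j}. spin emb N \<gamma> i j * \<gamma> j i)
                   + (\<Sum>(i,j)\<in>{(i,j)\<in>IN N \<times> IN N. i \<le> j}. \<gamma> j i * spin emb N \<gamma> i j))"

end

theory Submission
  imports Defs
begin

(* The spin operators s_ij = 1/2 sum_l gamma_il gamma_lj - (N - i + 1/2) delta_ij are quadratic
   in the Clifford generators, so the Clifford relations make [s_ij, -] act on the gammas like
   gl on its defining representation, and the s_ij satisfy the gl relations at level 1; since
   e and gamma commute, t = e + s satisfies them at level k + 1.

   Moving gamma_ba past s_ab in the a <= b half of the cubic term rewrites
   D = sum e_ab gamma_ba + 1/3 (sum s_ab gamma_ba + sum_c 2c gamma_cc).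
   Anticommuting with gamma_ij, the first sum gives 2 e_ij and the bracket gives 6 s_ij: the
   normal-ordering constants of the s_ii cancel exactly against the trace term and the
   dimension 2N + 1. Commuting with t_ij, each contraction sum x_ab gamma_ba of a family x
   satisfying the gl relations at level c contributes c (i - j) gamma_ij and the trace term
   contributes 2 (i - j) gamma_ij, which adds up to (k + 1)(i - j) gamma_ij. The relations
   for D^2 follow from [D^2, x] = [D, {D, x}] = {D, [D, x]}. *)

definition anticommut :: "'a::ring \<Rightarrow> 'a \<Rightarrow> 'a" where
  "anticommut a b = a * b + b * a"

lemma commut_add_left: "commut (a + b) (c::'a::ring) = commut a c + commut b c"
  and commut_add_right: "commut c (a + b) = commut c a + commut c b"
  and commut_diff_left: "commut (a - b) c = commut a c - commut b c"
  and commut_diff_right: "commut c (a - b) = commut c a - commut c b"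
  and commut_swap: "commut b c = - commut c b"
  and commut_zero [simp]: "commut 0 c = 0" "commut c 0 = 0"
  by (simp_all add: commut_def algebra_simps)

lemma commut_sum_left: "commut (sum f A) (c::'a::ring) = (\<Sum>x\<in>A. commut (f x) c)"
  and commut_sum_right: "commut c (sum f A) = (\<Sum>x\<in>A. commut c (f x))"
  and anticommut_sum_left: "anticommut (sum f A) c = (\<Sum>x\<in>A. anticommut (f x) c)"
  and anticommut_add_left: "anticommut (a + b) c = anticommut a c + anticommut b c"
  by (simp_all add: commut_def anticommut_def sum_distrib_left sum_distrib_right
      sum_subtractf sum.distrib algebra_simps)

lemma commut_mult_left: "commut (a * b) (c::'a::ring) = a * commut b c + commut a c * b"
  and commut_mult_left_anticommut: "commut (a * b) c = a * anticommut b c - anticommut a c * b"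
  and commut_mult_right: "commut c (a * b) = commut c a * b + a * commut c b"
  and anticommut_mult_left: "anticommut (a * b) c = a * anticommut b c - commut a c * b"
  by (simp_all add: commut_def anticommut_def algebra_simps)

lemma
  assumes "\<And>y. z * y = y * (z::'a::ring)"
  shows commut_central_mult_left: "commut (z * a) b = z * commut a b"
    and commut_central_mult_right: "commut b (z * a) = z * commut b a"
    and anticommut_central_mult_left: "anticommut (z * a) b = z * anticommut a b"
    and anticommut_central_mult_right: "anticommut b (z * a) = z * anticommut b a"
proof -
  have "b * (z * a) = z * (b * a)"
    by (metis assms mult.assoc)
  then show "commut (z * a) b = z * commut a b" "commut b (z * a) = z * commut b a"
    "anticommut (z * a) b = z * anticommut a b" "anticommut b (z * a) = z * anticommut b a"
    by (simp_all add: commut_def anticommut_def right_diff_distrib distrib_left mult.assoc assms)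
qed

lemma commut_square_eq_commut_anticommut: "commut (a ^ 2) (b::'a::ring_1) = commut a (anticommut a b)"
  and commut_square_eq_anticommut_commut: "commut (a ^ 2) b = anticommut a (commut a b)"
  by (simp_all add: commut_def anticommut_def power2_eq_square algebra_simps)

lemma sum_if_const_cond: "(\<Sum>x\<in>A. if P then f x else 0) = (if P then sum f A else 0)"
  by simp

lemma sum_le_pairs_fst:
  fixes A :: "'b::linorder set" and g :: "'b \<Rightarrow> 'a::semiring_1"
  assumes "finite A"
  shows "(\<Sum>(a, b)\<in>{(a, b)\<in>A \<times> A. a \<le> b}. g a) = (\<Sum>a\<in>A. of_nat (card {b\<in>A. a \<le> b}) * g a)"
proof -
  have pairs: "{(a, b)\<in>A \<times> A. a \<le> b} = (SIGMA a:A. {b\<in>A. a \<le> b})"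
    by auto
  have "(\<Sum>(a, b)\<in>{(a, b)\<in>A \<times> A. a \<le> b}. g a) = (\<Sum>a\<in>A. \<Sum>b\<in>{b\<in>A. a \<le> b}. g a)"
    unfolding pairs by (rule sum.Sigma[symmetric]) (use assms in auto)
  then show ?thesis
    by simp
qed

lemma sum_le_pairs_snd:
  fixes A :: "'b::linorder set" and g :: "'b \<Rightarrow> 'a::semiring_1"
  assumes "finite A"
  shows "(\<Sum>(a, b)\<in>{(a, b)\<in>A \<times> A. a \<le> b}. g b) = (\<Sum>b\<in>A. of_nat (card {a\<in>A. a \<le> b}) * g b)"
proof -
  have pairs: "{(a, b)\<in>A \<times> A. a \<le> b} = (SIGMA a:A. {b\<in>A. a \<le> b})"
    by auto
  have "(\<Sum>(a, b)\<in>{(a, b)\<in>A \<times> A. a \<le> b}. g b) = (\<Sum>a\<in>A. \<Sum>b\<in>{b\<in>A. a \<le> b}. g b)"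
    unfolding pairs by (rule sum.Sigma[symmetric]) (use assms in auto)
  also have "\<dots> = (\<Sum>b\<in>A. \<Sum>a\<in>{a\<in>A. a \<le> b}. g b)"
    by (rule sum.swap_restrict[OF assms assms])
  finally show ?thesis
    by simp
qed

lemma card_IN_le: "b \<in> IN N \<Longrightarrow> card {a\<in>IN N. a \<le> b} = nat (b + N + 1)"
  and card_IN_ge: "a \<in> IN N \<Longrightarrow> card {b\<in>IN N. a \<le> b} = nat (N - a + 1)"
proof -
  assume "b \<in> IN N"
  then have "{a\<in>IN N. a \<le> b} = {-N..b}"
    by (auto simp: IN_def)
  then show "card {a\<in>IN N. a \<le> b} = nat (b + N + 1)"
    by simp
next
  assume "a \<in> IN N"
  then have "{b\<in>IN N. a \<le> b} = {a..N}"
    by (auto simp: IN_def)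
  then show "card {b\<in>IN N. a \<le> b} = nat (N - a + 1)"
    by simp
qed

lemma of_nat_card_IN:
  assumes "i \<in> IN N"
  shows "of_nat (card (IN N)) * 2 = (of_int (2 * (2 * N + 1)) :: 'a::ring_1)"
proof -
  have "int (card (IN N) * 2) = 2 * (2 * N + 1)"
    using assms by (simp add: IN_def)
  then have "of_nat (card (IN N) * 2) = (of_int (2 * (2 * N + 1)) :: 'a)"
    by (metis of_int_of_nat_eq)
  then show ?thesis
    by simp
qed

lemma finite_IN [simp]: "finite (IN N)"
  by (simp add: IN_def)

lemma sum_IN_le_pairs_diff:
  fixes f :: "int \<Rightarrow> 'a::ring_1"
  shows "(\<Sum>(a, b)\<in>{(a, b)\<in>IN N \<times> IN N. a \<le> b}. f b - f a) = (\<Sum>c\<in>IN N. of_int (2 * c) * f c)"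
proof -
  have "(\<Sum>(a, b)\<in>{(a, b)\<in>IN N \<times> IN N. a \<le> b}. f b - f a)
      = (\<Sum>c\<in>IN N. of_nat (card {a\<in>IN N. a \<le> c}) * f c) - (\<Sum>c\<in>IN N. of_nat (card {b\<in>IN N. c \<le> b}) * f c)"
    unfolding sum_le_pairs_fst[OF finite_IN, symmetric] sum_le_pairs_snd[OF finite_IN, symmetric]
    by (simp add: sum_subtractf split_def)
  also have "\<dots> = (\<Sum>c\<in>IN N. of_int (2 * c) * f c)"
    unfolding sum_subtractf[symmetric]
  proof (rule sum.cong)
    fix c assume c: "c \<in> IN N"
    moreover have "- N \<le> c" "c \<le> N"
      using c by (auto simp: IN_def)
    ultimately have "of_nat (card {a\<in>IN N. a \<le> c}) - of_nat (card {b\<in>IN N. c \<le> b}) = (of_int (2 * c) :: 'a)"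
      by (simp add: card_IN_le card_IN_ge, simp add: mult_2)
    then show "of_nat (card {a\<in>IN N. a \<le> c}) * f c - of_nat (card {b\<in>IN N. c \<le> b}) * f c = of_int (2 * c) * f c"
      by (simp only: left_diff_distrib[symmetric])
  qed simp
  finally show ?thesis .
qed

locale complex_algebra =
  fixes emb :: "complex \<Rightarrow> 'a::ring_1"
  assumes complex_alg_emb: "complex_alg_emb emb"
begin

lemma emb_add: "emb (x + y) = emb x + emb y"
  and emb_mult: "emb (x * y) = emb x * emb y"
  and emb_1 [simp]: "emb 1 = 1"
  and emb_central: "emb x * a = a * emb x"
  using complex_alg_emb unfolding complex_alg_emb_def by blast+

lemma emb_0 [simp]: "emb 0 = 0"
  using emb_add[of 0 0] by simp

lemma emb_diff: "emb (x - y) = emb x - emb y"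
  by (metis emb_add eq_diff_eq)

lemma emb_of_int: "emb (of_int n) = of_int n"
proof -
  have emb_of_nat: "emb (of_nat m) = of_nat m" for m
    by (induction m) (simp_all add: emb_add)
  obtain m m' where "n = int m - int m'"
    using int_diff_cases by blast
  then show ?thesis
    by (simp add: emb_diff emb_of_nat)
qed

lemma emb_numeral: "emb (numeral n) = numeral n"
  using emb_of_int[of "numeral n"] by simp

lemmas commut_emb_mult_left = commut_central_mult_left[OF emb_central]
  and commut_emb_mult_right = commut_central_mult_right[OF emb_central]
  and anticommut_emb_mult_left = anticommut_central_mult_left[OF emb_central]
  and anticommut_emb_mult_right = anticommut_central_mult_right[OF emb_central]

lemma commut_emb [simp]: "commut (emb x) b = 0" "commut b (emb x) = 0"
  by (simp_all add: commut_def emb_central)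

lemma emb_inverse_numeral: "emb (1 / numeral n) * (numeral n * a) = a"
proof -
  have "emb (1 / numeral n) * numeral n = emb (1 / numeral n * numeral n)"
    by (simp only: emb_mult emb_numeral)
  then show ?thesis
    by (simp add: mult.assoc[symmetric])
qed

end

locale clifford = complex_algebra emb for emb :: "complex \<Rightarrow> 'a::ring_1" +
  fixes N :: int and \<gamma> :: "int \<Rightarrow> int \<Rightarrow> 'a"
  assumes anticommut_gamma: "\<lbrakk>i \<in> IN N; j \<in> IN N; l \<in> IN N; m \<in> IN N\<rbrakk> \<Longrightarrow>
    anticommut (\<gamma> i j) (\<gamma> l m) = (if i = m \<and> j = l then 2 else 0)"
begin

abbreviation s :: "int \<Rightarrow> int \<Rightarrow> 'a" where
  "s \<equiv> spin emb N \<gamma>"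

definition gamma_sq :: "int \<Rightarrow> int \<Rightarrow> 'a" where
  "gamma_sq i j = (\<Sum>l\<in>IN N. \<gamma> i l * \<gamma> l j)"

lemma half_gamma_sq: "emb (1/2) * gamma_sq i j = s i j + (if i = j then emb (of_int N - of_int i + 1/2) else 0)"
  by (simp add: spin_def gamma_sq_def)

lemma gamma_sq_eq_spin: "gamma_sq i j = 2 * (s i j + (if i = j then emb (of_int N - of_int i + 1/2) else 0))"
proof -
  have "2 * (emb (1/2) * gamma_sq i j) = emb (1/2) * (2 * gamma_sq i j)"
    by (simp only: mult.assoc[symmetric] emb_central[of _ 2])
  then have "gamma_sq i j = 2 * (emb (1/2) * gamma_sq i j)"
    by (simp only: emb_inverse_numeral)
  then show ?thesis
    by (simp only: half_gamma_sq)
qed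

lemma commut_gamma_sq_gamma:
  assumes "i \<in> IN N" "j \<in> IN N" "l \<in> IN N" "m \<in> IN N"
  shows "commut (gamma_sq i j) (\<gamma> l m) = 2 * ((if j = l then \<gamma> i m else 0) - (if i = m then \<gamma> l j else 0))"
proof -
  have "commut (gamma_sq i j) (\<gamma> l m)
      = (\<Sum>a\<in>IN N. (if a = m \<and> j = l then \<gamma> i a * 2 else 0) - (if i = m \<and> a = l then 2 * \<gamma> a j else 0))"
    unfolding gamma_sq_def commut_sum_left commut_mult_left_anticommut
    by (rule sum.cong) (use assms in \<open>simp_all add: anticommut_gamma\<close>)
  also have "\<dots> = 2 * ((if j = l then \<gamma> i m else 0) - (if i = m then \<gamma> l j else 0))"
    using assms by (auto simp: sum_subtractf mult_2 mult_2_right)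
  finally show ?thesis .
qed

lemma commut_spin_gamma:
  assumes "i \<in> IN N" "j \<in> IN N" "l \<in> IN N" "m \<in> IN N"
  shows "commut (s i j) (\<gamma> l m) = (if j = l then \<gamma> i m else 0) - (if i = m then \<gamma> l j else 0)"
proof -
  have "commut (s i j) (\<gamma> l m) = emb (1/2) * commut (gamma_sq i j) (\<gamma> l m)"
    unfolding spin_def gamma_sq_def[symmetric] commut_diff_left commut_emb_mult_left by simp
  then show ?thesis
    by (simp only: commut_gamma_sq_gamma[OF assms] emb_inverse_numeral)
qed

lemma commut_gamma_spin:
  assumes "i \<in> IN N" "j \<in> IN N" "l \<in> IN N" "m \<in> IN N"
  shows "commut (\<gamma> l m) (s i j) = (if i = m then \<gamma> l j else 0) - (if j = l then \<gamma> i m else 0)"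
  using commut_spin_gamma[OF assms] by (subst commut_swap) simp

lemma commut_spin_gamma_sq:
  assumes "i \<in> IN N" "j \<in> IN N" "l \<in> IN N" "m \<in> IN N"
  shows "commut (s i j) (gamma_sq l m) = (if j = l then gamma_sq i m else 0) - (if i = m then gamma_sq l j else 0)"
proof -
  have "commut (s i j) (gamma_sq l m) = (\<Sum>a\<in>IN N.
        ((if j = l then \<gamma> i a * \<gamma> a m else 0) - (if a = i then \<gamma> l j * \<gamma> a m else 0))
      + ((if a = j then \<gamma> l a * \<gamma> i m else 0) - (if i = m then \<gamma> l a * \<gamma> a j else 0)))"
    unfolding gamma_sq_def commut_sum_right commut_mult_right
    by (rule sum.cong) (use assms in \<open>auto simp: commut_spin_gamma left_diff_distrib right_diff_distrib\<close>)
  also have "\<dots> = (if j = l then gamma_sq i m else 0) - (if i = m then gamma_sq l j else 0)"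
    using assms by (simp add: sum.distrib sum_subtractf gamma_sq_def)
  finally show ?thesis .
qed

lemma commut_spin_spin:
  assumes "i \<in> IN N" "j \<in> IN N" "l \<in> IN N" "m \<in> IN N"
  shows "commut (s i j) (s l m) = (if j = l then s i m else 0) - (if i = m then s l j else 0)
         + (if j = l \<and> i = m then emb (of_int (l - i)) else 0)"
proof -
  have "commut (s i j) (s l m) = emb (1/2) * commut (s i j) (gamma_sq l m)"
    unfolding spin_def[of _ _ _ l m] gamma_sq_def[symmetric] commut_diff_right commut_emb_mult_right by simp
  also have "\<dots> = (if j = l then emb (1/2) * gamma_sq i m else 0) - (if i = m then emb (1/2) * gamma_sq l j else 0)"
    using assms by (simp add: commut_spin_gamma_sq right_diff_distrib)
  also have "\<dots> = (if j = l then s i m else 0) - (if i = m then s l j else 0)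
         + (if j = l \<and> i = m then emb (of_int (l - i)) else 0)"
    by (auto simp: half_gamma_sq emb_diff[symmetric])
  finally show ?thesis .
qed

definition gamma_contraction :: "(int \<Rightarrow> int \<Rightarrow> 'a) \<Rightarrow> 'a" where
  "gamma_contraction x = (\<Sum>(a, b)\<in>IN N \<times> IN N. x a b * \<gamma> b a)"

definition weighted_gamma_trace :: 'a where
  "weighted_gamma_trace = (\<Sum>c\<in>IN N. of_int (2 * c) * \<gamma> c c)"

lemma sum_gamma_rev_prod:
  assumes "i \<in> IN N" "j \<in> IN N"
  shows "(\<Sum>a\<in>IN N. \<gamma> a j * \<gamma> i a) = of_nat (card (IN N)) * (if i = j then 2 else 0) - gamma_sq i j"
proof -
  have "(\<Sum>a\<in>IN N. \<gamma> a j * \<gamma> i a) = (\<Sum>a\<in>IN N. (if i = j then 2 else 0) - \<gamma> i a * \<gamma> a j)"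
  proof (rule sum.cong)
    fix a assume "a \<in> IN N"
    then have "anticommut (\<gamma> a j) (\<gamma> i a) = (if i = j then 2 else 0)"
      using assms by (auto simp: anticommut_gamma)
    then show "\<gamma> a j * \<gamma> i a = (if i = j then 2 else 0) - \<gamma> i a * \<gamma> a j"
      by (simp add: anticommut_def eq_diff_eq)
  qed simp
  then show ?thesis
    by (simp add: sum_subtractf gamma_sq_def)
qed

lemma anticommut_contraction_spin_gamma:
  assumes "i \<in> IN N" "j \<in> IN N"
  shows "anticommut (gamma_contraction s) (\<gamma> i j)
    = 2 * s i j + 2 * gamma_sq i j - of_nat (card (IN N)) * (if i = j then 2 else 0)"
proof -
  have "anticommut (gamma_contraction s) (\<gamma> i j) = (\<Sum>(a, b)\<in>IN N \<times> IN N.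
      (if a = i then if b = j then 2 * s i j else 0 else 0)
      - (if b = i then \<gamma> a j * \<gamma> i a else 0) + (if a = j then \<gamma> i b * \<gamma> b j else 0))"
    unfolding gamma_contraction_def anticommut_sum_left
    by (rule sum.cong) (use assms in \<open>auto simp: anticommut_mult_left anticommut_gamma commut_spin_gamma
        mult_2 mult_2_right algebra_simps\<close>)
  also have "\<dots> = 2 * s i j - (\<Sum>a\<in>IN N. \<gamma> a j * \<gamma> i a) + gamma_sq i j"
    using assms by (simp add: sum.cartesian_product[symmetric] sum.distrib sum_subtractf
        sum_if_const_cond gamma_sq_def)
  finally show ?thesis
    using assms by (simp add: sum_gamma_rev_prod mult_2 algebra_simps)
qed

lemma anticommut_trace_gamma:
  assumes "i \<in> IN N" "j \<in> IN N"
  shows "anticommut weighted_gamma_trace (\<gamma> i j) = (if i = j then of_int (4 * i) else 0)"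
proof -
  have "anticommut weighted_gamma_trace (\<gamma> i j)
      = (\<Sum>c\<in>IN N. if c = i then (if i = j then of_int (2 * c) * 2 else 0) else 0)"
    unfolding weighted_gamma_trace_def anticommut_sum_left
  proof (rule sum.cong)
    fix c assume "c \<in> IN N"
    then show "anticommut (of_int (2 * c) * \<gamma> c c) (\<gamma> i j)
        = (if c = i then (if i = j then of_int (2 * c) * 2 else 0) else 0)"
      using assms by (simp only: anticommut_central_mult_left[OF mult_of_int_commute] anticommut_gamma) auto
  qed simp
  then show ?thesis
    using assms by (simp add: mult.assoc mult_of_int_commute[of _ 2])
qed

lemma normal_ordering_cancel:
  assumes "i \<in> IN N"
  shows "4 * emb (of_int N - of_int i + 1/2) + of_int (4 * i) = of_nat (card (IN N)) * 2"
proof -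
  have "4 * emb (of_int N - of_int i + 1/2) = emb (4 * (of_int N - of_int i + 1/2))"
    by (simp only: emb_mult emb_numeral)
  also have "4 * (of_int N - of_int i + 1/2) = (of_int (2 * (2 * N + 1) - 4 * i) :: complex)"
    by simp
  finally show ?thesis
    unfolding emb_of_int of_nat_card_IN[OF assms] by (simp flip: of_int_add)
qed

lemma anticommut_cubic_gamma:
  assumes "i \<in> IN N" "j \<in> IN N"
  shows "anticommut (gamma_contraction s + weighted_gamma_trace) (\<gamma> i j) = 6 * s i j"
proof (cases "i = j")
  case True
  have "anticommut (gamma_contraction s + weighted_gamma_trace) (\<gamma> i j)
      = 6 * s i j + (4 * emb (of_int N - of_int i + 1/2) + of_int (4 * i) - of_nat (card (IN N)) * 2)"
    unfolding anticommut_add_left anticommut_contraction_spin_gamma[OF assms]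
      anticommut_trace_gamma[OF assms] gamma_sq_eq_spin
    using True by (simp add: algebra_simps, simp flip: distrib_right)
  also have "\<dots> = 6 * s i j"
    by (simp only: normal_ordering_cancel[OF assms(1)] diff_self add_0_right)
  finally show ?thesis .
next
  case False
  then show ?thesis
    unfolding anticommut_add_left anticommut_contraction_spin_gamma[OF assms]
      anticommut_trace_gamma[OF assms] gamma_sq_eq_spin
    by (simp add: algebra_simps, simp flip: distrib_right)
qed

end

locale cubic_dirac = clifford emb N \<gamma> for emb :: "complex \<Rightarrow> 'a::ring_1" and N \<gamma> +
  fixes k :: complex and e :: "int \<Rightarrow> int \<Rightarrow> 'a"
  assumes commut_e: "\<lbrakk>i \<in> IN N; j \<in> IN N; l \<in> IN N; m \<in> IN N\<rbrakk> \<Longrightarrow>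
      commut (e i j) (e l m) = (if j = l then e i m else 0) - (if i = m then e l j else 0)
        + (if j = l \<and> i = m then emb (k * of_int (l - i)) else 0)"
    and commut_e_gamma: "\<lbrakk>i \<in> IN N; j \<in> IN N; l \<in> IN N; m \<in> IN N\<rbrakk> \<Longrightarrow> commut (e i j) (\<gamma> l m) = 0"
begin

abbreviation t :: "int \<Rightarrow> int \<Rightarrow> 'a" where
  "t \<equiv> tee emb N \<gamma> e"

abbreviation D :: 'a where
  "D \<equiv> Dirac emb N \<gamma> e"

lemma commut_e_spin:
  assumes "i \<in> IN N" "j \<in> IN N" "l \<in> IN N" "m \<in> IN N"
  shows "commut (e i j) (s l m) = 0"
proof -
  have "commut (e i j) (gamma_sq l m) = 0"
    unfolding gamma_sq_def commut_sum_right
    by (rule sum.neutral) (use assms in \<open>simp add: commut_mult_right commut_e_gamma\<close>)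
  then show ?thesis
    by (simp add: spin_def gamma_sq_def[symmetric] commut_diff_right commut_emb_mult_right)
qed

lemma
  assumes "i \<in> IN N" "j \<in> IN N" "l \<in> IN N" "m \<in> IN N"
  shows commut_e_tee: "commut (e l m) (t i j) = commut (e l m) (e i j)"
    and commut_spin_tee: "commut (s l m) (t i j) = commut (s l m) (s i j)"
    and commut_gamma_tee: "commut (\<gamma> l m) (t i j) = commut (\<gamma> l m) (s i j)"
  using commut_e_spin[OF assms(3,4,1,2)] commut_e_spin[OF assms] commut_e_gamma[OF assms]
  by (simp_all add: tee_def commut_add_right commut_swap[of _ "e i j"])

lemma commut_tee_tee:
  assumes "i \<in> IN N" "j \<in> IN N" "l \<in> IN N" "m \<in> IN N"
  shows "commut (t i j) (t l m)
       = (if j = l then t i m else 0) - (if i = m then t l j else 0)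
         + (if j = l \<and> i = m then emb ((k + 1) * of_int (l - i)) else 0)"
proof -
  have "commut (t i j) (t l m) = commut (e i j) (e l m) + commut (s i j) (s l m)"
    using assms by (simp add: tee_def[of _ _ _ _ i j] commut_add_left commut_e_tee commut_spin_tee)
  also have "\<dots> = (if j = l then t i m else 0) - (if i = m then t l j else 0)
         + (if j = l \<and> i = m then emb (k * of_int (l - i)) + emb (of_int (l - i)) else 0)"
    using assms by (simp add: commut_e commut_spin_spin tee_def algebra_simps)
  also have "emb (k * of_int (l - i)) + emb (of_int (l - i)) = emb ((k + 1) * of_int (l - i))"
    by (simp only: distrib_right mult_1_left emb_add)
  finally show ?thesis .
qed

lemma Dirac_eq: "D = gamma_contraction e + emb (1/3) * (gamma_contraction s + weighted_gamma_trace)"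
proof -
  let ?above = "{(a, b)\<in>IN N \<times> IN N. a > b}" and ?below = "{(a, b)\<in>IN N \<times> IN N. a \<le> b}"
  have "(\<Sum>(a, b)\<in>?below. \<gamma> b a * s a b) = (\<Sum>(a, b)\<in>?below. s a b * \<gamma> b a + (\<gamma> b b - \<gamma> a a))"
  proof (rule sum.cong)
    fix p assume "p \<in> ?below"
    then obtain a b where p: "p = (a, b)" "a \<in> IN N" "b \<in> IN N"
      by auto
    have "commut (s a b) (\<gamma> b a) = \<gamma> a a - \<gamma> b b"
      using commut_spin_gamma[OF p(2,3,3,2)] by simp
    then show "(case p of (a, b) \<Rightarrow> \<gamma> b a * s a b) = (case p of (a, b) \<Rightarrow> s a b * \<gamma> b a + (\<gamma> b b - \<gamma> a a))"
      by (simp add: p commut_def algebra_simps)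
  qed simp
  also have "\<dots> = (\<Sum>(a, b)\<in>?below. s a b * \<gamma> b a) + weighted_gamma_trace"
    unfolding weighted_gamma_trace_def sum_IN_le_pairs_diff[symmetric]
    by (simp add: sum.distrib split_def)
  finally have below: "(\<Sum>(a, b)\<in>?below. \<gamma> b a * s a b) = (\<Sum>(a, b)\<in>?below. s a b * \<gamma> b a) + weighted_gamma_trace" .
  have "finite ?above" "finite ?below"
    by (rule finite_subset[of _ "IN N \<times> IN N"]; auto)+
  then have split: "gamma_contraction s = (\<Sum>(a, b)\<in>?above. s a b * \<gamma> b a) + (\<Sum>(a, b)\<in>?below. s a b * \<gamma> b a)"
    unfolding gamma_contraction_def by (subst sum.union_disjoint[symmetric]) (auto intro: sum.cong)
  show ?thesis
    unfolding Dirac_def below gamma_contraction_def[of e, symmetric] by (simp only: split add.assoc)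
qed

lemma anticommut_contraction_e_gamma:
  assumes "i \<in> IN N" "j \<in> IN N"
  shows "anticommut (gamma_contraction e) (\<gamma> i j) = 2 * e i j"
proof -
  have "anticommut (gamma_contraction e) (\<gamma> i j)
      = (\<Sum>(a, b)\<in>IN N \<times> IN N. if a = i then if b = j then 2 * e i j else 0 else 0)"
    unfolding gamma_contraction_def anticommut_sum_left
    by (rule sum.cong) (use assms in \<open>auto simp: anticommut_mult_left anticommut_gamma commut_e_gamma
        mult_2 mult_2_right\<close>)
  then show ?thesis
    using assms by (simp add: sum.cartesian_product[symmetric] sum_if_const_cond)
qed

lemma anticommut_Dirac_gamma:
  assumes "i \<in> IN N" "j \<in> IN N"
  shows "anticommut D (\<gamma> i j) = 2 * t i j"
proof -
  have "anticommut D (\<gamma> i j) = 2 * e i j + emb (1/3) * (6 * s i j)"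
    unfolding Dirac_eq anticommut_add_left[of "gamma_contraction e"] anticommut_emb_mult_left
    by (simp only: anticommut_contraction_e_gamma[OF assms] anticommut_cubic_gamma[OF assms])
  also have "emb (1/3) * (6 * s i j) = emb (1/3) * (3 * (2 * s i j))"
    by (simp add: mult.assoc[symmetric])
  also have "\<dots> = 2 * s i j"
    by (rule emb_inverse_numeral)
  finally show ?thesis
    by (simp add: tee_def distrib_left)
qed

lemma commut_contraction_tee:
  fixes x :: "int \<Rightarrow> int \<Rightarrow> 'a" and c :: complex
  assumes i: "i \<in> IN N" and j: "j \<in> IN N"
    and gl: "\<And>a b. a \<in> IN N \<Longrightarrow> b \<in> IN N \<Longrightarrow> commut (x a b) (x i j)
      = (if b = i then x a j else 0) - (if a = j then x i b else 0)
        + (if b = i \<and> a = j then emb (c * of_int (i - a)) else 0)"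
    and x_tee: "\<And>a b. a \<in> IN N \<Longrightarrow> b \<in> IN N \<Longrightarrow> commut (x a b) (t i j) = commut (x a b) (x i j)"
  shows "commut (gamma_contraction x) (t i j) = emb (c * of_int (i - j)) * \<gamma> i j"
proof -
  have "commut (gamma_contraction x) (t i j)
    = (\<Sum>(a, b)\<in>IN N \<times> IN N. (if b = i then x a j * \<gamma> i a else 0) - (if a = j then x i b * \<gamma> b j else 0)
        + (if a = j then if b = i then emb (c * of_int (i - j)) * \<gamma> i j else 0 else 0)
        + ((if a = i then x i b * \<gamma> b j else 0) - (if b = j then x a j * \<gamma> i a else 0)))"
    unfolding gamma_contraction_def commut_sum_left
    by (rule sum.cong) (auto simp: commut_mult_left x_tee commut_gamma_tee commut_gamma_spin gl i j
        algebra_simps)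
  also have "\<dots> = emb (c * of_int (i - j)) * \<gamma> i j"
    using i j by (simp add: sum.cartesian_product[symmetric] sum.distrib sum_subtractf sum_if_const_cond)
  finally show ?thesis .
qed

lemma commut_trace_tee:
  assumes "i \<in> IN N" "j \<in> IN N"
  shows "commut weighted_gamma_trace (t i j) = of_int (2 * (i - j)) * \<gamma> i j"
proof -
  have "commut weighted_gamma_trace (t i j)
      = (\<Sum>c\<in>IN N. (if c = i then of_int (2 * i) * \<gamma> i j else 0) - (if c = j then of_int (2 * j) * \<gamma> i j else 0))"
    unfolding weighted_gamma_trace_def commut_sum_left
  proof (rule sum.cong)
    fix c assume "c \<in> IN N"
    then show "commut (of_int (2 * c) * \<gamma> c c) (t i j)
        = (if c = i then of_int (2 * i) * \<gamma> i j else 0) - (if c = j then of_int (2 * j) * \<gamma> i j else 0)"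
      using assms by (simp only: commut_central_mult_left[OF mult_of_int_commute] commut_gamma_tee
          commut_gamma_spin) (auto simp: right_diff_distrib)
  qed simp
  also have "\<dots> = of_int (2 * (i - j)) * \<gamma> i j"
    using assms by (simp add: sum_subtractf left_diff_distrib)
  finally show ?thesis .
qed

lemma commut_Dirac_tee:
  assumes "i \<in> IN N" "j \<in> IN N"
  shows "commut D (t i j) = emb ((k + 1) * of_int (i - j)) * \<gamma> i j"
proof -
  have e: "commut (gamma_contraction e) (t i j) = emb (k * of_int (i - j)) * \<gamma> i j"
    by (rule commut_contraction_tee) (use assms in \<open>simp_all add: commut_e commut_e_tee\<close>)
  have s: "commut (gamma_contraction s) (t i j) = emb (1 * of_int (i - j)) * \<gamma> i j"
    by (rule commut_contraction_tee) (use assms in \<open>simp_all add: commut_spin_spin commut_spin_tee\<close>)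
  have "emb (1 * of_int (i - j)) * \<gamma> i j + of_int (2 * (i - j)) * \<gamma> i j
      = of_int ((i - j) + 2 * (i - j)) * \<gamma> i j"
    by (simp only: mult_1_left emb_of_int of_int_add distrib_right)
  also have "\<dots> = 3 * (of_int (i - j) * \<gamma> i j)"
    by (simp only: of_int_mult[symmetric] mult.assoc[symmetric]) simp
  finally have trace_and_spin: "emb (1 * of_int (i - j)) * \<gamma> i j + of_int (2 * (i - j)) * \<gamma> i j
      = 3 * (of_int (i - j) * \<gamma> i j)" .
  have "commut D (t i j) = emb (k * of_int (i - j)) * \<gamma> i j
      + emb (1/3) * (3 * (of_int (i - j) * \<gamma> i j))"
    unfolding Dirac_eq commut_add_left commut_emb_mult_left e s commut_trace_tee[OF assms] trace_and_spin ..
  also have "\<dots> = emb ((k + 1) * of_int (i - j)) * \<gamma> i j"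
    by (simp only: emb_inverse_numeral distrib_right mult_1_left emb_add emb_of_int)
  finally show ?thesis .
qed

lemma commut_Dirac_square_gamma:
  assumes "i \<in> IN N" "j \<in> IN N"
  shows "commut (D ^ 2) (\<gamma> i j) = emb (2 * (k + 1) * of_int (i - j)) * \<gamma> i j"
proof -
  have "commut (D ^ 2) (\<gamma> i j) = emb 2 * commut D (t i j)"
    unfolding commut_square_eq_commut_anticommut anticommut_Dirac_gamma[OF assms] emb_numeral[symmetric]
    by (rule commut_emb_mult_right)
  also have "\<dots> = emb (2 * (k + 1) * of_int (i - j)) * \<gamma> i j"
    by (simp only: commut_Dirac_tee[OF assms] mult.assoc emb_mult)
  finally show ?thesis .
qed

lemma commut_Dirac_square_tee:
  assumes "i \<in> IN N" "j \<in> IN N"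
  shows "commut (D ^ 2) (t i j) = emb (2 * (k + 1) * of_int (i - j)) * t i j"
proof -
  have "commut (D ^ 2) (t i j) = emb ((k + 1) * of_int (i - j)) * (emb 2 * t i j)"
    unfolding commut_square_eq_anticommut_commut commut_Dirac_tee[OF assms] anticommut_emb_mult_right
      anticommut_Dirac_gamma[OF assms]
    by (simp only: emb_numeral)
  also have "\<dots> = emb (2 * (k + 1) * of_int (i - j)) * t i j"
    by (simp only: mult.assoc[symmetric] emb_mult[symmetric] mult.commute[of "(k + 1) * of_int (i - j)" 2])
  finally show ?thesis .
qed

end

theorem mainTheorem8:
  fixes emb :: "complex \<Rightarrow> 'a::ring_1"
    and N :: int and k :: complex
    and e \<gamma> :: "int \<Rightarrow> int \<Rightarrow> 'a"
  assumes alg: "complex_alg_emb emb"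
    and N1: "N \<ge> 1"
    and rel_e: "\<And>i j l m. \<lbrakk>i \<in> IN N; j \<in> IN N; l \<in> IN N; m \<in> IN N\<rbrakk> \<Longrightarrow>
        e i j * e l m - e l m * e i j =
          (if j = l then e i m else 0) - (if i = m then e l j else 0)
          + (if j = l \<and> i = m then emb (k * of_int (l - i)) else 0)"
    and rel_cl: "\<And>i j l m. \<lbrakk>i \<in> IN N; j \<in> IN N; l \<in> IN N; m \<in> IN N\<rbrakk> \<Longrightarrow>
        \<gamma> i j * \<gamma> l m + \<gamma> l m * \<gamma> i j = (if i = m \<and> j = l then 2 else 0)"
    and rel_eg: "\<And>i j l m. \<lbrakk>i \<in> IN N; j \<in> IN N; l \<in> IN N; m \<in> IN N\<rbrakk> \<Longrightarrow>
        e i j * \<gamma> l m = \<gamma> l m * e i j"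
    and idx: "i \<in> IN N" "j \<in> IN N" "l \<in> IN N" "m \<in> IN N"
  shows
    "commut (spin emb N \<gamma> i j) (\<gamma> l m)
       = (if j = l then \<gamma> i m else 0) - (if i = m then \<gamma> l j else 0)
     \<and> commut (spin emb N \<gamma> i j) (spin emb N \<gamma> l m)
       = (if j = l then spin emb N \<gamma> i m else 0) - (if i = m then spin emb N \<gamma> l j else 0)
         + (if j = l \<and> i = m then emb (of_int (l - i)) else 0)
     \<and> commut (tee emb N \<gamma> e i j) (tee emb N \<gamma> e l m)
       = (if j = l then tee emb N \<gamma> e i m else 0) - (if i = m then tee emb N \<gamma> e l j else 0)
         + (if j = l \<and> i = m then emb ((k + 1) * of_int (l - i)) else 0)
     \<and> Dirac emb N \<gamma> e * \<gamma> i j + \<gamma> i j * Dirac emb N \<gamma> e = 2 * tee emb N \<gamma> e i j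
     \<and> commut (Dirac emb N \<gamma> e) (tee emb N \<gamma> e i j)
       = emb ((k + 1) * of_int (i - j)) * \<gamma> i j
     \<and> commut (Dirac emb N \<gamma> e ^ 2) (\<gamma> i j)
       = emb (2 * (k + 1) * of_int (i - j)) * \<gamma> i j
     \<and> commut (Dirac emb N \<gamma> e ^ 2) (tee emb N \<gamma> e i j)
       = emb (2 * (k + 1) * of_int (i - j)) * tee emb N \<gamma> e i j"
proof -
  interpret cubic_dirac emb N \<gamma> k e
    by unfold_locales (simp_all add: alg commut_def anticommut_def rel_e rel_cl rel_eg)
  show ?thesis
    using idx by (simp add: commut_spin_gamma commut_spin_spin commut_tee_tee
        anticommut_Dirac_gamma[unfolded anticommut_def] commut_Dirac_tee
        commut_Dirac_square_gamma commut_Dirac_square_tee)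
qed

end
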